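(* The group $\mathrm{GL}_n(\mathbb C)\times\mathrm{GL}_n(\mathbb C)$ has $2^{n-1}$ orbits on $\mathrm{Hinge}_n$. These orbits are enumerated by the number $k\in\{1,\dots,n\}$ of terms and the positive integers $\alpha_1=\mathrm{rk}\,P_1,\dots,\alpha_k=\mathrm{rk}\,P_k$, where $\alpha_1+\dots+\alpha_k=n$: two hinges lie in the same orbit iff these data coincide, and every such tuple $(\alpha_1,\dots,\alpha_k)$ occurs.
   Context: Let $V=\mathbb C^n$. For a linear subspace (linear relation) $P\subset V\oplus V$: $\mathrm{Ker}\,P=\{v: v\oplus0\in P\}$, $\mathrm{Dom}\,P$ and $\mathrm{Im}\,P$ are the projections of $P$ to the first and second summands, $\mathrm{Indef}\,P=\{w:0\oplus w\in P\}$, $\mathrm{rk}\,P=\dim\mathrm{Dom}\,P-\dim\mathrm{Ker}\,P$. A hinge is a sequence $(P_1,\dots,P_k)$ of $n$-dimensional subspaces of $V\oplus V$ such that $\mathrm{Ker}\,P_j=\mathrm{Dom}\,P_{j+1}$ and $\mathrm{Im}\,P_j=\mathrm{Indef}\,P_{j+1}$ for $1\le j\le k-1$, $\mathrm{Dom}\,P_1=V$, $\mathrm{Im}\,P_k=V$, and $\mathrm{rk}\,P_j>0$ for all $j$. $\mathrm{Hinge}_n$ is the set of all hinges. $(g_1,g_2)\in\mathrm{GL}_n(\mathbb C)\times\mathrm{GL}_n(\mathbb C)$ acts on $V\oplus V$ by $v\oplus w\mapsto g_1v\oplus g_2w$, and on hinges termwise. *)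

theory Defs
  imports "HOL-Analysis.Analysis"
begin

text \<open>V = complex^'n (so n = CARD('n)); V \<oplus> V is modelled as the product type,
  with componentwise complex scalar multiplication.\<close>

type_synonym 'n cvec = "complex ^ 'n"

definition pscale :: "complex \<Rightarrow> 'n::finite cvec \<times> 'n cvec \<Rightarrow> 'n cvec \<times> 'n cvec" where
  "pscale c p = (c *s fst p, c *s snd p)"

interpretation pv: vector_space "pscale :: complex \<Rightarrow> 'n::finite cvec \<times> 'n cvec \<Rightarrow> _"
  by unfold_locales
     (auto simp: pscale_def vector_space_over_itself.scale_right_distrib
       vec.scale_right_distrib vec.scale_left_distrib vec.scale_scale)

definition KerR :: "('n::finite cvec \<times> 'n cvec) set \<Rightarrow> 'n cvec set" where
  "KerR P = {v. (v, 0) \<in> P}"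

definition DomR :: "('n::finite cvec \<times> 'n cvec) set \<Rightarrow> 'n cvec set" where
  "DomR P = fst ` P"

definition ImR :: "('n::finite cvec \<times> 'n cvec) set \<Rightarrow> 'n cvec set" where
  "ImR P = snd ` P"

definition IndefR :: "('n::finite cvec \<times> 'n cvec) set \<Rightarrow> 'n cvec set" where
  "IndefR P = {w. (0, w) \<in> P}"

definition rkR :: "('n::finite cvec \<times> 'n cvec) set \<Rightarrow> nat" where
  "rkR P = vec.dim (DomR P) - vec.dim (KerR P)"

definition ndim_subspace :: "('n::finite cvec \<times> 'n cvec) set \<Rightarrow> bool" where
  "ndim_subspace P \<longleftrightarrow> pv.subspace P \<and> pv.dim P = CARD('n)"

definition is_hinge :: "('n::finite cvec \<times> 'n cvec) set list \<Rightarrow> bool" where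
  "is_hinge Ps \<longleftrightarrow> Ps \<noteq> [] \<and>
     (\<forall>j < length Ps. ndim_subspace (Ps ! j)) \<and>
     (\<forall>j. j + 1 < length Ps \<longrightarrow> KerR (Ps ! j) = DomR (Ps ! (j+1))
                              \<and> ImR (Ps ! j) = IndefR (Ps ! (j+1))) \<and>
     DomR (hd Ps) = UNIV \<and> ImR (last Ps) = UNIV \<and>
     (\<forall>j < length Ps. rkR (Ps ! j) > 0)"

definition Hinge :: "('n::finite cvec \<times> 'n cvec) set list set" where
  "Hinge = {Ps. is_hinge Ps}"

definition act :: "complex^'n^'n \<Rightarrow> complex^'n^'n \<Rightarrow> ('n::finite cvec \<times> 'n cvec) set
    \<Rightarrow> ('n::finite cvec \<times> 'n cvec) set" where
  "act g1 g2 P = (\<lambda>(v, w). (g1 *v v, g2 *v w)) ` P"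

definition hinge_orbit :: "('n::finite cvec \<times> 'n cvec) set list \<Rightarrow> ('n cvec \<times> 'n cvec) set list set" where
  "hinge_orbit Ps = {map (act g1 g2) Ps | g1 g2. invertible g1 \<and> invertible g2}"

end

theory Submission
  imports Defs
begin

text \<open>For a hinge \<open>(P\<^sub>1, \<dots>, P\<^sub>k)\<close> the domains \<open>D\<^sub>j = Dom P\<^sub>j\<close> form a descending flag
  \<open>V = D\<^sub>1 \<supseteq> D\<^sub>2 \<supseteq> \<dots> \<supseteq> D\<^sub>k \<supseteq> 0\<close> with \<open>D\<^sub>j\<^sub>+\<^sub>1 = Ker P\<^sub>j\<close>; since \<open>dim P\<^sub>j = n\<close> forces
  \<open>Ker P\<^sub>k = 0\<close> and \<open>Indef P\<^sub>1 = 0\<close>, the ranks \<open>rk P\<^sub>j = dim D\<^sub>j - dim D\<^sub>j\<^sub>+\<^sub>1\<close> form a composition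
  of \<open>n\<close>. Choose a basis \<open>b\<close> of \<open>V\<close> adapted to this flag, the vectors of the \<open>j\<close>-th block
  spanning a complement of \<open>D\<^sub>j\<^sub>+\<^sub>1\<close> in \<open>D\<^sub>j\<close>, and lift each \<open>b\<^sub>i\<close> to \<open>(b\<^sub>i, c\<^sub>i) \<in> P\<^sub>j\<close>.
  Because \<open>Indef P\<^sub>j\<^sub>+\<^sub>1 = Im P\<^sub>j\<close>, induction on \<open>j\<close> shows that the \<open>c\<^sub>i\<close> of the blocks up to
  \<open>j\<close> span \<open>Im P\<^sub>j\<close>, so the \<open>c\<^sub>i\<close> form a basis as well. In the bases \<open>b\<close> and \<open>c\<close> every \<open>P\<^sub>j\<close>
  contains, hence by dimension equals, the coordinate relation in which \<open>e\<^sub>i\<close> is fixed,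
  killed or indefinite according as \<open>i\<close> lies in, after or before the \<open>j\<close>-th block. Thus the
  orbit of a hinge is determined by its ranks, every composition occurs, and there are
  \<open>2\<^sup>n\<^sup>-\<^sup>1\<close> compositions of \<open>n\<close>.\<close>


section \<open>Adapted bases of flags\<close>

context finite_dimensional_vector_space
begin

lemma complement_basis_exists:
  assumes "W \<subseteq> U"
  obtains E where "E \<subseteq> U" "finite E" "card E = dim U - dim W" "U \<subseteq> span (W \<union> E)"
proof -
  obtain B' where B': "B' \<subseteq> W" "independent B'" "W \<subseteq> span B'" "card B' = dim W"
    by (rule basis_exists)
  obtain B where B: "B' \<subseteq> B" "B \<subseteq> U" "independent B" "U \<subseteq> span B"
    using maximal_independent_subset_extend[of B' U] B' assms by blast
  have "finite B" "card B = dim U"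
    using B basis_card_eq_dim finiteI_independent by auto
  show thesis
  proof (rule that[of "B - B'"])
    show "B - B' \<subseteq> U" "finite (B - B')"
      using B \<open>finite B\<close> by auto
    show "card (B - B') = dim U - dim W"
      using B(1) B'(4) \<open>card B = dim U\<close> \<open>finite B\<close> by (simp add: card_Diff_subset finite_subset)
    have "B \<subseteq> W \<union> (B - B')"
      using B'(1) by blast
    then show "U \<subseteq> span (W \<union> (B - B'))"
      using B(4) span_mono by blast
  qed
qed

lemma extend_flag_adapted_basis:
  fixes blk :: "'i::finite \<Rightarrow> nat"
  assumes "D' \<subseteq> D" and card_blk: "card {i. blk i = n} = dim D - dim D'"
    and D'_span: "D' \<subseteq> span (b ` {i. Suc n \<le> blk i})"
  obtains b' where "\<forall>i. blk i = n \<longrightarrow> b' i \<in> D" and "\<forall>i. blk i \<noteq> n \<longrightarrow> b' i = b i"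
    and "D \<subseteq> span (b' ` {i. n \<le> blk i})"
proof -
  obtain E where E: "E \<subseteq> D" "finite E" "card E = dim D - dim D'" and D_span: "D \<subseteq> span (D' \<union> E)"
    using complement_basis_exists[OF \<open>D' \<subseteq> D\<close>] by blast
  obtain h where h: "bij_betw h {i. blk i = n} E"
    using finite_same_card_bij[of "{i. blk i = n}" E] card_blk E by auto
  define b' where "b' i = (if blk i = n then h i else b i)" for i
  have "b ` {i. Suc n \<le> blk i} = b' ` {i. Suc n \<le> blk i}"
    by (auto simp: b'_def)
  also have "span \<dots> \<subseteq> span (b' ` {i. n \<le> blk i})"
    by (intro span_mono image_mono) auto
  finally have "D' \<subseteq> span (b' ` {i. n \<le> blk i})"
    using D'_span by blast
  moreover have "E \<subseteq> b' ` {i. n \<le> blk i}"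
    using h by (force simp: bij_betw_def b'_def)
  ultimately have "span (D' \<union> E) \<subseteq> span (b' ` {i. n \<le> blk i})"
    by (intro span_minimal) (auto intro: span_base)
  moreover have "\<forall>i. blk i = n \<longrightarrow> b' i \<in> D"
    using h E(1) by (auto simp: b'_def bij_betw_def)
  ultimately show thesis
    using D_span by (intro that[of b']) (auto simp: b'_def)
qed

text \<open>By the dimension count, the vectors \<open>b i\<close> with \<open>blk i = j\<close> span a complement of
  \<open>D (Suc j)\<close> in \<open>D j\<close>.\<close>
lemma flag_adapted_basis_exists:
  fixes D :: "nat \<Rightarrow> 'b set" and blk :: "'i::finite \<Rightarrow> nat"
  assumes D_Suc: "\<And>j. D (Suc j) \<subseteq> D j" and D_k: "D k = {0}" and blk_less: "\<And>i. blk i < k"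
    and card_blk: "\<And>j. j < k \<Longrightarrow> card {i. blk i = j} = dim (D j) - dim (D (Suc j))"
  shows "\<exists>b. (\<forall>i. b i \<in> D (blk i)) \<and> (\<forall>j\<le>k. D j \<subseteq> span (b ` {i. j \<le> blk i}))"
proof -
  have "\<exists>b. (\<forall>i. n \<le> blk i \<longrightarrow> b i \<in> D (blk i)) \<and>
      (\<forall>j. n \<le> j \<and> j \<le> k \<longrightarrow> D j \<subseteq> span (b ` {i. j \<le> blk i}))" if "n \<le> k" for n
    using that
  proof (induction rule: inc_induct)
    case base
    show ?case
    proof (intro exI[of _ "\<lambda>_. 0"] conjI allI impI)
      show "0 \<in> D (blk i)" if "k \<le> blk i" for i
        using that blk_less[of i] by simp
      show "D j \<subseteq> span ((\<lambda>_. 0) ` {i. j \<le> blk i})" if "k \<le> j \<and> j \<le> k" for j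
        using that D_k span_zero by auto
    qed
  next
    case (step n)
    then obtain b where b_mem: "\<forall>i. Suc n \<le> blk i \<longrightarrow> b i \<in> D (blk i)"
      and b_span: "\<forall>j. Suc n \<le> j \<and> j \<le> k \<longrightarrow> D j \<subseteq> span (b ` {i. j \<le> blk i})"
      by blast
    have "D (Suc n) \<subseteq> span (b ` {i. Suc n \<le> blk i})"
      using b_span step.hyps(2) by simp
    then obtain b' where b'_mem: "\<forall>i. blk i = n \<longrightarrow> b' i \<in> D n"
      and b'_eq: "\<forall>i. blk i \<noteq> n \<longrightarrow> b' i = b i" and D_n_span: "D n \<subseteq> span (b' ` {i. n \<le> blk i})"
      using extend_flag_adapted_basis[OF D_Suc card_blk[OF step.hyps(2)]] by blast
    have b'_image: "b' ` {i. j \<le> blk i} = b ` {i. j \<le> blk i}" if "Suc n \<le> j" for j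
      using that b'_eq by force
    show ?case
    proof (intro exI[of _ b'] conjI allI impI)
      show "b' i \<in> D (blk i)" if "n \<le> blk i" for i
        using that b_mem b'_mem b'_eq by (cases "blk i = n") auto
      show "D j \<subseteq> span (b' ` {i. j \<le> blk i})" if "n \<le> j \<and> j \<le> k" for j
        using that D_n_span b_span b'_image[of j] by (cases "j = n") auto
    qed
  qed
  from this[of 0] show ?thesis by simp
qed

end

section \<open>Compositions\<close>

definition compositions :: "nat \<Rightarrow> nat list set" where
  "compositions n = {\<alpha>. \<alpha> \<noteq> [] \<and> (\<forall>a\<in>set \<alpha>. 0 < a) \<and> sum_list \<alpha> = n}"

lemma compositions_1: "compositions (Suc 0) = {[1]}"
proof (intro equalityI subsetI)
  fix \<alpha> assume "\<alpha> \<in> compositions (Suc 0)"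
  then obtain a \<beta> where "\<alpha> = a # \<beta>" "0 < a" "\<forall>b\<in>set \<beta>. 0 < b" "a + sum_list \<beta> = 1"
    by (auto simp: compositions_def neq_Nil_conv)
  then show "\<alpha> \<in> {[1]}"
    by (cases \<beta>) auto
qed (simp add: compositions_def)

lemma compositions_Suc_Suc:
  "compositions (Suc (Suc m)) =
     Cons 1 ` compositions (Suc m) \<union> (\<lambda>\<beta>. Suc (hd \<beta>) # tl \<beta>) ` compositions (Suc m)"
proof (intro equalityI subsetI)
  fix \<alpha> assume "\<alpha> \<in> compositions (Suc (Suc m))"
  then obtain a \<beta> where \<alpha>: "\<alpha> = a # \<beta>" and pos: "0 < a" "\<forall>b\<in>set \<beta>. 0 < b"
    and sum: "a + sum_list \<beta> = Suc (Suc m)"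
    by (auto simp: compositions_def neq_Nil_conv)
  show "\<alpha> \<in> Cons 1 ` compositions (Suc m) \<union> (\<lambda>\<beta>. Suc (hd \<beta>) # tl \<beta>) ` compositions (Suc m)"
  proof (cases "a = 1")
    case True
    then have "\<beta> \<in> compositions (Suc m)"
      using pos sum by (auto simp: compositions_def)
    then show ?thesis using \<alpha> True by blast
  next
    case False
    then have "(a - 1) # \<beta> \<in> compositions (Suc m)"
      using pos sum by (auto simp: compositions_def)
    moreover have "\<alpha> = Suc (hd ((a - 1) # \<beta>)) # tl ((a - 1) # \<beta>)"
      using \<alpha> pos by simp
    ultimately show ?thesis by blast
  qed
qed (auto simp: compositions_def neq_Nil_conv)

lemma card_compositions: "card (compositions (Suc m)) = 2 ^ m"
proof (induction m)
  case 0
  show ?case by (simp add: compositions_1)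
next
  case (Suc m)
  let ?C = "compositions (Suc m)" and ?inc = "\<lambda>\<beta>. Suc (hd \<beta>) # tl \<beta>"
  have fin: "finite ?C"
    using Suc.IH card.infinite by fastforce
  have hd_pos: "0 < hd \<beta>" if "\<beta> \<in> ?C" for \<beta>
    using that by (auto simp: compositions_def neq_Nil_conv)
  have disj: "Cons 1 ` ?C \<inter> ?inc ` ?C = {}"
    using hd_pos by fastforce
  have "inj_on ?inc ?C"
    by (rule inj_onI) (auto simp: compositions_def intro: list.expand)
  then have "card (compositions (Suc (Suc m))) = card ?C + card ?C"
    using fin disj by (simp add: compositions_Suc_Suc card_Un_disjoint card_image)
  then show ?case
    using Suc.IH by simp
qed

lemma exists_block_function:
  assumes "finite S" "sum_list \<alpha> = card S"
  shows "\<exists>f. (\<forall>x\<in>S. f x < length \<alpha>) \<and> (\<forall>j<length \<alpha>. card {x\<in>S. f x = j} = \<alpha> ! j)"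
  using assms
proof (induction \<alpha> arbitrary: S)
  case (Cons a \<beta>)
  obtain A where A: "A \<subseteq> S" "card A = a"
    using obtain_subset_with_card_n[of a S] Cons.prems by auto
  moreover have "finite A"
    using A(1) Cons.prems(1) finite_subset by blast
  ultimately have "finite (S - A)" "sum_list \<beta> = card (S - A)"
    using Cons.prems by (auto simp: card_Diff_subset)
  then obtain g where g_less: "\<forall>x\<in>S - A. g x < length \<beta>"
    and card_g: "\<forall>j<length \<beta>. card {x\<in>S - A. g x = j} = \<beta> ! j"
    using Cons.IH by blast
  define f where "f x = (if x \<in> A then 0 else Suc (g x))" for x
  have fibres: "{x\<in>S. f x = 0} = A" "{x\<in>S. f x = Suc j} = {x\<in>S - A. g x = j}" for j
    using A(1) by (auto simp: f_def)
  show ?case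
  proof (intro exI[of _ f] conjI ballI allI impI)
    show "f x < length (a # \<beta>)" if "x \<in> S" for x
      using that g_less by (auto simp: f_def)
    show "card {x\<in>S. f x = j} = (a # \<beta>) ! j" if "j < length (a # \<beta>)" for j
      using that fibres card_g A(2) by (cases j) auto
  qed
qed simp

text \<open>Assigns the coordinate \<open>i\<close> to the term \<open>blocks \<alpha> i\<close> of a hinge with ranks \<open>\<alpha>\<close>; the
  choice is only specified when \<open>sum_list \<alpha> = CARD('n)\<close>.\<close>
definition blocks :: "nat list \<Rightarrow> 'n::finite \<Rightarrow> nat" where
  "blocks \<alpha> = (SOME f. (\<forall>i. f i < length \<alpha>) \<and> (\<forall>j<length \<alpha>. card {i. f i = j} = \<alpha> ! j))"

lemma
  assumes "sum_list \<alpha> = CARD('n::finite)"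
  shows blocks_less: "(blocks \<alpha> :: 'n \<Rightarrow> nat) i < length \<alpha>"
    and card_blocks: "j < length \<alpha> \<Longrightarrow> card {i. (blocks \<alpha> :: 'n \<Rightarrow> nat) i = j} = \<alpha> ! j"
proof -
  have "\<exists>f :: 'n \<Rightarrow> nat. (\<forall>i. f i < length \<alpha>) \<and> (\<forall>j<length \<alpha>. card {i. f i = j} = \<alpha> ! j)"
    using exists_block_function[of "UNIV :: 'n set" \<alpha>] assms by simp
  from someI_ex[OF this] show "(blocks \<alpha> :: 'n \<Rightarrow> nat) i < length \<alpha>"
    and "j < length \<alpha> \<Longrightarrow> card {i. (blocks \<alpha> :: 'n \<Rightarrow> nat) i = j} = \<alpha> ! j"
    unfolding blocks_def by auto
qed

section \<open>Linear relations\<close>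

text \<open>\<open>pv\<close> only provides a vector space structure on \<open>V \<oplus> V\<close>; viewing it as the
  product of two copies of \<open>vec\<close> imports the dimension theory of products
  (\<open>dim_Times\<close>, \<open>dim_sums_Int\<close>, \<open>subspace_dim_equal\<close>) for the same scalar multiplication.\<close>
interpretation rel: finite_dimensional_vector_space_prod
  "(*s) :: complex \<Rightarrow> 'n::finite cvec \<Rightarrow> _" "(*s) :: complex \<Rightarrow> 'n cvec \<Rightarrow> _" cart_basis cart_basis ..

lemma rel_scale_eq_pscale: "rel.scale = pscale"
  by (auto simp: rel.scale_def pscale_def fun_eq_iff)

lemmas pv_subspace_Times = rel.subspace_Times[unfolded rel_scale_eq_pscale]
lemmas pv_dim_Times = rel.dim_Times[unfolded rel_scale_eq_pscale]
lemmas pv_dim_sums_Int = rel.p.dim_sums_Int[unfolded rel_scale_eq_pscale]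
lemmas pv_subspace_dim_equal = rel.p.subspace_dim_equal[unfolded rel_scale_eq_pscale]

lemma pscale_Pair [simp]: "pscale c (v, w) = (c *s v, c *s w)"
  by (simp add: pscale_def)

lemma module_hom_fst: "module_hom pscale (*s) (fst :: 'n::finite cvec \<times> 'n cvec \<Rightarrow> _)"
  by (auto simp: module_hom_iff pv.module_axioms vec.module_axioms)

lemma module_hom_snd: "module_hom pscale (*s) (snd :: 'n::finite cvec \<times> 'n cvec \<Rightarrow> _)"
  by (auto simp: module_hom_iff pv.module_axioms vec.module_axioms)

lemma module_hom_Pair_0: "module_hom (*s) pscale (Pair (0 :: 'n::finite cvec) :: 'n cvec \<Rightarrow> _)"
  by (auto simp: module_hom_iff pv.module_axioms vec.module_axioms)

lemma module_hom_Pair_left_0: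
  "module_hom (*s) pscale ((\<lambda>v. (v, 0)) :: 'n::finite cvec \<Rightarrow> 'n cvec \<times> 'n cvec)"
  by (auto simp: module_hom_iff pv.module_axioms vec.module_axioms)

lemma subspace_DomR: "pv.subspace P \<Longrightarrow> vec.subspace (DomR P)"
  unfolding DomR_def by (rule module_hom.subspace_image[OF module_hom_fst])

lemma subspace_ImR: "pv.subspace P \<Longrightarrow> vec.subspace (ImR P)"
  unfolding ImR_def by (rule module_hom.subspace_image[OF module_hom_snd])

lemma subspace_KerR: "pv.subspace P \<Longrightarrow> vec.subspace (KerR P)"
  using module_hom.subspace_vimage[OF module_hom_Pair_left_0] by (simp add: KerR_def vimage_def)

lemma subspace_IndefR: "pv.subspace P \<Longrightarrow> vec.subspace (IndefR P)"
  using module_hom.subspace_vimage[OF module_hom_Pair_0] by (simp add: IndefR_def vimage_def)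

lemma KerR_subset_DomR: "KerR P \<subseteq> DomR P"
  by (force simp: KerR_def DomR_def)

lemma IndefR_subset_ImR: "IndefR P \<subseteq> ImR P"
  by (force simp: IndefR_def ImR_def)

text \<open>The sum of \<open>P\<close> and the vertical subspace \<open>0 \<oplus> V\<close> is \<open>Dom P \<oplus> V\<close>, their intersection
  is \<open>0 \<oplus> Indef P\<close>.\<close>
lemma dim_DomR_IndefR:
  assumes P: "pv.subspace (P :: ('n::finite cvec \<times> 'n cvec) set)"
  shows "pv.dim P = vec.dim (DomR P) + vec.dim (IndefR P)"
proof -
  let ?T = "{0} \<times> UNIV :: ('n cvec \<times> 'n cvec) set"
  have T: "pv.subspace ?T"
    by (intro pv_subspace_Times vec.subspace_single_0 vec.subspace_UNIV)
  have "{p + q |p q. p \<in> P \<and> q \<in> ?T} = DomR P \<times> (UNIV :: 'n cvec set)"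
    (is "?L = ?R")
  proof (intro equalityI subsetI)
    fix x assume "x \<in> ?R"
    then obtain v w w' where "x = (v, w)" "(v, w') \<in> P" by (force simp: DomR_def)
    then show "x \<in> ?L"
      by (intro CollectI exI[of _ "(v, w')"] exI[of _ "(0, w - w')"]) auto
  qed (force simp: DomR_def)
  moreover have "P \<inter> ?T = {0} \<times> IndefR P"
    by (auto simp: IndefR_def zero_prod_def)
  ultimately have "vec.dim (DomR P) + CARD('n) + vec.dim (IndefR P) = pv.dim P + CARD('n)"
    using pv_dim_sums_Int[OF P T]
    by (simp add: pv_dim_Times subspace_DomR subspace_IndefR P card_cart_basis)
  then show ?thesis by simp
qed

lemma dim_ImR_KerR:
  assumes P: "pv.subspace (P :: ('n::finite cvec \<times> 'n cvec) set)"
  shows "pv.dim P = vec.dim (ImR P) + vec.dim (KerR P)"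
proof -
  let ?T = "UNIV \<times> {0} :: ('n cvec \<times> 'n cvec) set"
  have T: "pv.subspace ?T"
    by (intro pv_subspace_Times vec.subspace_single_0 vec.subspace_UNIV)
  have "{p + q |p q. p \<in> P \<and> q \<in> ?T} = (UNIV :: 'n cvec set) \<times> ImR P"
    (is "?L = ?R")
  proof (intro equalityI subsetI)
    fix x assume "x \<in> ?R"
    then obtain v v' w where "x = (v, w)" "(v', w) \<in> P" by (force simp: ImR_def)
    then show "x \<in> ?L"
      by (intro CollectI exI[of _ "(v', w)"] exI[of _ "(v - v', 0)"]) auto
  qed (force simp: ImR_def)
  moreover have "P \<inter> ?T = KerR P \<times> {0}"
    by (auto simp: KerR_def zero_prod_def)
  ultimately have "CARD('n) + vec.dim (ImR P) + vec.dim (KerR P) = pv.dim P + CARD('n)"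
    using pv_dim_sums_Int[OF P T]
    by (simp add: pv_dim_Times subspace_ImR subspace_KerR P
        card_cart_basis)
  then show ?thesis by simp
qed

lemma IndefR_eq_0_if_DomR_UNIV:
  assumes "ndim_subspace (P :: ('n::finite cvec \<times> 'n cvec) set)" "DomR P = UNIV"
  shows "IndefR P = {0}"
  using assms dim_DomR_IndefR[of P] subspace_IndefR[of P] vec.subspace_0[of "IndefR P"]
  by (auto simp: ndim_subspace_def card_cart_basis)

lemma KerR_eq_0_if_ImR_UNIV:
  assumes "ndim_subspace (P :: ('n::finite cvec \<times> 'n cvec) set)" "ImR P = UNIV"
  shows "KerR P = {0}"
  using assms dim_ImR_KerR[of P] subspace_KerR[of P] vec.subspace_0[of "KerR P"]
  by (auto simp: ndim_subspace_def card_cart_basis)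

lemma relation_partner_in_span:
  assumes P: "pv.subspace P" and X: "\<And>x. x \<in> X \<Longrightarrow> \<exists>z\<in>vec.span Z. (x, z) \<in> P"
    and x: "x \<in> vec.span X"
  shows "\<exists>z\<in>vec.span Z. (x, z) \<in> P"
proof -
  let ?Q = "P \<inter> (UNIV \<times> vec.span Z)"
  have "vec.subspace (fst ` ?Q)"
    by (intro module_hom.subspace_image[OF module_hom_fst] pv.subspace_inter P
        pv_subspace_Times vec.subspace_UNIV vec.subspace_span)
  moreover have "X \<subseteq> fst ` ?Q"
    using X by force
  ultimately have "vec.span X \<subseteq> fst ` ?Q"
    by (rule vec.span_minimal[rotated])
  then show ?thesis
    using x by force
qed

section \<open>Coordinate hinges\<close>

definition coord_subspace :: "('n::finite \<Rightarrow> bool) \<Rightarrow> 'n cvec set" where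
  "coord_subspace Q = {v. \<forall>i. Q i \<longrightarrow> v $ i = 0}"

lemma coord_subspace_UNIV: "(\<And>i. \<not> Q i) \<Longrightarrow> coord_subspace Q = UNIV"
  by (auto simp: coord_subspace_def)

lemma dim_coord_subspace: "vec.dim (coord_subspace Q :: 'n::finite cvec set) = card {i. \<not> Q i}"
proof -
  let ?B = "(\<lambda>i. axis i (1::complex) :: 'n cvec) ` {i. \<not> Q i}"
  have "card ?B = vec.dim (coord_subspace Q)"
  proof (rule vec.basis_card_eq_dim)
    show "?B \<subseteq> coord_subspace Q" by (auto simp: coord_subspace_def axis_def)
    show "vec.independent ?B"
      by (rule vec.independent_mono[OF independent_cart_basis]) (auto simp: cart_basis_def)
    show "coord_subspace Q \<subseteq> vec.span ?B"
    proof
      fix v :: "'n cvec" assume v: "v \<in> coord_subspace Q"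
      have "v = (\<Sum>i\<in>UNIV. v $ i *s axis i 1)" by (simp add: basis_expansion)
      also have "\<dots> = (\<Sum>i\<in>{i. \<not> Q i}. v $ i *s axis i 1)"
        using v by (intro sum.mono_neutral_right) (auto simp: coord_subspace_def)
      also have "\<dots> \<in> vec.span ?B"
        by (intro vec.span_sum vec.span_scale vec.span_base) auto
      finally show "v \<in> vec.span ?B" .
    qed
  qed
  moreover have "card ?B = card {i. \<not> Q i}"
    by (rule card_image) (auto simp: inj_on_def axis_eq_axis)
  ultimately show ?thesis by simp
qed

lemma card_Collect_add_card_not: "card {i::'a::finite. Q i} + card {i. \<not> Q i} = CARD('a)"
  by (subst card_Un_disjoint[symmetric]) (auto intro: arg_cong[where f = card])

definition coord_rel :: "('n::finite \<Rightarrow> nat) \<Rightarrow> nat \<Rightarrow> ('n cvec \<times> 'n cvec) set" where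
  "coord_rel blk j = {(v, w). (\<forall>i. blk i < j \<longrightarrow> v $ i = 0) \<and> (\<forall>i. j < blk i \<longrightarrow> w $ i = 0)
      \<and> (\<forall>i. blk i = j \<longrightarrow> v $ i = w $ i)}"

lemma subspace_coord_rel: "pv.subspace (coord_rel blk j)"
  by (auto simp: pv.subspace_def coord_rel_def zero_prod_def)

lemma DomR_coord_rel: "DomR (coord_rel blk j) = coord_subspace (\<lambda>i. blk i < j)"
proof (intro equalityI subsetI)
  fix v assume "v \<in> coord_subspace (\<lambda>i. blk i < j)"
  then have "(v, \<chi> i. if blk i = j then v $ i else 0) \<in> coord_rel blk j"
    by (auto simp: coord_rel_def coord_subspace_def)
  then show "v \<in> DomR (coord_rel blk j)" unfolding DomR_def by force
qed (auto simp: DomR_def coord_rel_def coord_subspace_def)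

lemma ImR_coord_rel: "ImR (coord_rel blk j) = coord_subspace (\<lambda>i. j < blk i)"
proof (intro equalityI subsetI)
  fix w assume "w \<in> coord_subspace (\<lambda>i. j < blk i)"
  then have "(\<chi> i. if blk i = j then w $ i else 0, w) \<in> coord_rel blk j"
    by (auto simp: coord_rel_def coord_subspace_def)
  then show "w \<in> ImR (coord_rel blk j)" unfolding ImR_def by force
qed (auto simp: ImR_def coord_rel_def coord_subspace_def)

lemma KerR_coord_rel: "KerR (coord_rel blk j) = coord_subspace (\<lambda>i. blk i \<le> j)"
  by (auto simp: KerR_def coord_rel_def coord_subspace_def nat_less_le)

lemma IndefR_coord_rel: "IndefR (coord_rel blk j) = coord_subspace (\<lambda>i. j \<le> blk i)"
  by (auto simp: IndefR_def coord_rel_def coord_subspace_def nat_less_le)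

lemma ndim_subspace_coord_rel: "ndim_subspace (coord_rel blk j :: ('n::finite cvec \<times> 'n cvec) set)"
  using dim_DomR_IndefR[OF subspace_coord_rel, of blk j]
    card_Collect_add_card_not[of "\<lambda>i. j \<le> blk i"]
  by (simp add: ndim_subspace_def subspace_coord_rel DomR_coord_rel IndefR_coord_rel
      dim_coord_subspace not_less not_le)

lemma rkR_coord_rel: "rkR (coord_rel blk j) = card {i. blk i = j}"
proof -
  have "{i. j \<le> blk i} = {i. blk i = j} \<union> {i. j < blk i}" by auto
  then have "card {i. j \<le> blk i} = card {i. blk i = j} + card {i. j < blk i}"
    by (simp add: card_Un_disjoint disjoint_iff)
  then show ?thesis
    by (simp add: rkR_def DomR_coord_rel KerR_coord_rel dim_coord_subspace not_less not_le)
qed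

definition coord_hinge :: "('n::finite \<Rightarrow> nat) \<Rightarrow> nat \<Rightarrow> ('n cvec \<times> 'n cvec) set list" where
  "coord_hinge blk k = map (coord_rel blk) [0..<k]"

lemma is_hinge_coord_hinge:
  assumes "0 < k" and blk_less: "\<And>i. blk i < k" and "\<And>j. j < k \<Longrightarrow> 0 < card {i. blk i = j}"
  shows "is_hinge (coord_hinge blk k)"
proof -
  have "\<not> k - 1 < blk i" for i
    using blk_less[of i] by linarith
  then show ?thesis
    using assms
    by (simp add: is_hinge_def coord_hinge_def hd_map last_map ndim_subspace_coord_rel
        rkR_coord_rel DomR_coord_rel ImR_coord_rel KerR_coord_rel IndefR_coord_rel
        coord_subspace_UNIV less_Suc_eq_le Suc_le_eq del: upt_Suc)
qed

lemma map_rkR_coord_hinge: "map rkR (coord_hinge blk k) = map (\<lambda>j. card {i. blk i = j}) [0..<k]"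
  by (simp add: coord_hinge_def rkR_coord_rel)

lemma act_act: "act g1 g2 (act h1 h2 P) = act (g1 ** h1) (g2 ** h2) P"
  unfolding act_def image_comp
  by (rule image_cong) (auto simp: matrix_vector_mul_assoc)

lemma act_mat_1: "act (mat 1) (mat 1) = (\<lambda>P. P)"
  by (simp add: act_def fun_eq_iff)

lemma invertible_mat_1: "invertible (mat 1 :: 'a::semiring_1^'n^'n)"
  unfolding invertible_def by (intro exI[of _ "mat 1"]) simp

lemma invertible_imp_inj_matrix_vector_mult:
  "invertible (g :: 'a::field^'n^'n) \<Longrightarrow> inj ((*v) g)"
  by (simp add: invertible_eq_bij bij_is_inj)

lemma matrix_vector_mult_eq_0_iff: "inj ((*v) g) \<Longrightarrow> g *v v = 0 \<longleftrightarrow> v = 0"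
  by (metis injD matrix_vector_mult_0_right)

lemma DomR_act: "DomR (act g1 g2 P) = (*v) g1 ` DomR P"
  by (force simp: act_def DomR_def image_image)

lemma KerR_act: "inj ((*v) g2) \<Longrightarrow> KerR (act g1 g2 P) = (*v) g1 ` KerR P"
  by (force simp: act_def KerR_def matrix_vector_mult_eq_0_iff)

lemma IndefR_act: "inj ((*v) g1) \<Longrightarrow> IndefR (act g1 g2 P) = (*v) g2 ` IndefR P"
  by (force simp: act_def IndefR_def matrix_vector_mult_eq_0_iff)

lemma vec_dim_image_inj:
  "inj ((*v) (g :: complex^'n::finite^'n)) \<Longrightarrow> vec.dim ((*v) g ` S) = vec.dim S"
  using vec.dim_image_eq[OF matrix_vector_mul_linear_gen, of g S] by (simp add: inj_on_subset)

lemma rkR_act: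
  assumes "invertible g1" "invertible g2"
  shows "rkR (act g1 g2 P) = rkR P"
  using assms
  by (simp add: rkR_def DomR_act KerR_act vec_dim_image_inj invertible_imp_inj_matrix_vector_mult)

lemma ndim_subspace_act:
  assumes g: "invertible g1" "invertible g2" and "ndim_subspace P"
  shows "ndim_subspace (act g1 g2 P)"
proof -
  have P: "pv.subspace P" "pv.dim P = CARD('a)"
    using \<open>ndim_subspace P\<close> by (simp_all add: ndim_subspace_def)
  have "module_hom pscale pscale (\<lambda>(v, w). (g1 *v v, g2 *v w))"
    by (auto simp: module_hom_iff pv.module_axioms matrix_vector_right_distrib
        matrix_vector_mult_scaleR vec.scale)
  then have sub: "pv.subspace (act g1 g2 P)"
    unfolding act_def using P module_hom.subspace_image by blast
  have "pv.dim (act g1 g2 P) = pv.dim P"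
    using g P
    by (simp add: dim_DomR_IndefR sub DomR_act IndefR_act vec_dim_image_inj
        invertible_imp_inj_matrix_vector_mult)
  then show ?thesis using sub P(2) by (simp add: ndim_subspace_def)
qed

lemma mem_hinge_orbit_self: "Ps \<in> hinge_orbit Ps"
  unfolding hinge_orbit_def
  using invertible_mat_1 by (force simp: act_mat_1)

lemma map_rkR_hinge_orbit: "Qs \<in> hinge_orbit Ps \<Longrightarrow> map rkR Qs = map rkR Ps"
  by (auto simp: hinge_orbit_def rkR_act)

lemma hinge_orbit_map_act:
  assumes g1: "invertible g1" and g2: "invertible g2"
  shows "hinge_orbit (map (act g1 g2) Ps) = hinge_orbit Ps"
proof
  show "hinge_orbit (map (act g1 g2) Ps) \<subseteq> hinge_orbit Ps"
  proof
    fix Qs assume "Qs \<in> hinge_orbit (map (act g1 g2) Ps)"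
    then obtain h1 h2 where "invertible h1" "invertible h2"
      and "Qs = map (act (h1 ** g1) (h2 ** g2)) Ps"
      by (auto simp: hinge_orbit_def act_act)
    then show "Qs \<in> hinge_orbit Ps"
      unfolding hinge_orbit_def using g1 g2 invertible_mult[of h1 g1] invertible_mult[of h2 g2]
      by blast
  qed
  obtain g1' g2' where inv: "g1' ** g1 = mat 1" "g2' ** g2 = mat 1"
    and g': "invertible g1'" "invertible g2'"
    using g1 g2 by (meson invertible_def)
  show "hinge_orbit Ps \<subseteq> hinge_orbit (map (act g1 g2) Ps)"
  proof
    fix Qs assume "Qs \<in> hinge_orbit Ps"
    then obtain h1 h2 where "invertible h1" "invertible h2" and "Qs = map (act h1 h2) Ps"
      by (auto simp: hinge_orbit_def)
    moreover have "map (act h1 h2) Ps = map (act (h1 ** g1') (h2 ** g2')) (map (act g1 g2) Ps)"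
      using inv by (simp add: act_act matrix_mul_assoc[symmetric] act_mat_1)
    ultimately show "Qs \<in> hinge_orbit (map (act g1 g2) Ps)"
      unfolding hinge_orbit_def using g' invertible_mult[of h1 g1'] invertible_mult[of h2 g2']
      by blast
  qed
qed

lemma sum_lessThan_telescope_nat:
  fixes f :: "nat \<Rightarrow> nat"
  assumes "\<And>j. f (Suc j) \<le> f j"
  shows "(\<Sum>j<m. f j - f (Suc j)) = f 0 - f m"
proof (induction m)
  case (Suc m)
  have "f (Suc m) \<le> f m" "f m \<le> f 0"
    using assms lift_Suc_antimono_le[of f 0 m] by auto
  then show ?case
    using Suc.IH by simp
qed simp

text \<open>The flag is continued by \<open>{0}\<close> past the last term, which is the kernel of the last term.\<close>
definition dom_flag :: "('n::finite cvec \<times> 'n cvec) set list \<Rightarrow> nat \<Rightarrow> 'n cvec set" where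
  "dom_flag Ps j = (if j < length Ps then DomR (Ps ! j) else {0})"

locale hinge =
  fixes Ps :: "('n::finite cvec \<times> 'n cvec) set list"
  assumes is_hinge: "is_hinge Ps"
begin

lemma subspace_nth: "j < length Ps \<Longrightarrow> pv.subspace (Ps ! j)"
  using is_hinge by (auto simp: is_hinge_def ndim_subspace_def)

lemma ndim_subspace_nth: "j < length Ps \<Longrightarrow> ndim_subspace (Ps ! j)"
  using is_hinge by (auto simp: is_hinge_def)

lemma length_pos: "0 < length Ps"
  using is_hinge by (simp add: is_hinge_def)

lemma dom_flag_0: "dom_flag Ps 0 = UNIV"
  using is_hinge hd_conv_nth[of Ps] length_pos by (simp add: is_hinge_def dom_flag_def)

lemma dom_flag_length: "dom_flag Ps (length Ps) = {0}"
  by (simp add: dom_flag_def)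

lemma dom_flag_Suc:
  assumes j: "j < length Ps"
  shows "dom_flag Ps (Suc j) = KerR (Ps ! j)"
proof (cases "Suc j < length Ps")
  case True
  then show ?thesis using is_hinge by (simp add: is_hinge_def dom_flag_def)
next
  case False
  then have "j = length Ps - 1"
    using j by simp
  then have "Ps ! j = last Ps"
    using length_pos by (simp add: last_conv_nth)
  moreover have "ImR (last Ps) = UNIV"
    using is_hinge by (simp add: is_hinge_def)
  ultimately have "KerR (Ps ! j) = {0}"
    using ndim_subspace_nth[OF j] by (simp add: KerR_eq_0_if_ImR_UNIV)
  then show ?thesis using False by (simp add: dom_flag_def)
qed

lemma subspace_dom_flag: "vec.subspace (dom_flag Ps j)"
  by (simp add: dom_flag_def subspace_nth subspace_DomR)

lemma dom_flag_Suc_subset: "dom_flag Ps (Suc j) \<subseteq> dom_flag Ps j"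
proof (cases "j < length Ps")
  case True
  then show ?thesis using KerR_subset_DomR by (simp add: dom_flag_Suc) (simp add: dom_flag_def)
qed (simp add: dom_flag_def)

lemma dom_flag_antimono: "j \<le> j' \<Longrightarrow> dom_flag Ps j' \<subseteq> dom_flag Ps j"
  by (induction rule: dec_induct) (use dom_flag_Suc_subset in blast)+

lemma rkR_nth:
  "j < length Ps \<Longrightarrow> rkR (Ps ! j) = vec.dim (dom_flag Ps j) - vec.dim (dom_flag Ps (Suc j))"
  by (simp add: rkR_def dom_flag_Suc) (simp add: dom_flag_def)

lemma IndefR_0: "IndefR (Ps ! 0) = {0}"
  using is_hinge length_pos dom_flag_0
  by (intro IndefR_eq_0_if_DomR_UNIV) (auto simp: is_hinge_def dom_flag_def)

lemma IndefR_Suc: "Suc j < length Ps \<Longrightarrow> IndefR (Ps ! Suc j) = ImR (Ps ! j)"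
  using is_hinge by (simp add: is_hinge_def)

lemma ImR_subset_IndefR: "m < j \<Longrightarrow> j < length Ps \<Longrightarrow> ImR (Ps ! m) \<subseteq> IndefR (Ps ! j)"
proof (induction j)
  case (Suc j)
  then show ?case
    using IndefR_Suc IndefR_subset_ImR by (cases "m = j") (simp, fastforce)
qed simp

lemma sum_list_ranks: "sum_list (map rkR Ps) = CARD('n)"
proof -
  let ?d = "\<lambda>j. vec.dim (dom_flag Ps j)"
  have "sum_list (map rkR Ps) = (\<Sum>j<length Ps. ?d j - ?d (Suc j))"
    by (simp add: sum_list_sum_nth atLeast0LessThan rkR_nth)
  also have "\<dots> = ?d 0 - ?d (length Ps)"
    using vec.dim_subset[OF dom_flag_Suc_subset] by (rule sum_lessThan_telescope_nat)
  also have "\<dots> = CARD('n)"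
    by (simp add: dom_flag_0 dom_flag_length card_cart_basis)
  finally show ?thesis .
qed

lemma ranks_pos: "\<forall>P\<in>set Ps. 0 < rkR P"
  using is_hinge by (auto simp: is_hinge_def in_set_conv_nth)

lemma ranks_in_compositions: "map rkR Ps \<in> compositions CARD('n)"
  using ranks_pos sum_list_ranks length_pos by (auto simp: compositions_def)

lemma length_le_card: "length Ps \<le> CARD('n)"
proof -
  have "length Ps = (\<Sum>P\<leftarrow>Ps. 1)"
    by (simp add: sum_list_triv)
  also have "\<dots> \<le> (\<Sum>P\<leftarrow>Ps. rkR P)"
    using ranks_pos by (intro sum_list_mono) (simp add: Suc_leI)
  finally show ?thesis
    using sum_list_ranks by simp
qed

end

section \<open>Normal form\<close>

definition matrix_of_columns :: "('n::finite \<Rightarrow> 'a::comm_semiring_1^'m) \<Rightarrow> 'a^'n^'m" where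
  "matrix_of_columns b = (\<chi> r s. b s $ r)"

lemma matrix_of_columns_mult: "matrix_of_columns b *v u = (\<Sum>s\<in>UNIV. u $ s *s b s)"
  by (simp add: matrix_mult_sum column_def matrix_of_columns_def)

lemma invertible_matrix_of_columns:
  fixes b :: "'n::finite \<Rightarrow> 'a::field^'n"
  assumes "vec.span (range b) = UNIV"
  shows "invertible (matrix_of_columns b)"
proof -
  have "columns (matrix_of_columns b) = range b"
    by (auto simp: columns_def column_def matrix_of_columns_def)
  then obtain B where "matrix_of_columns b ** B = mat 1"
    using assms matrix_right_invertible_span_columns[of "matrix_of_columns b"] by auto
  then show ?thesis
    by (auto simp: invertible_right_inverse)
qed

text \<open>The matrices with columns \<open>b\<close> and \<open>c\<close> will move the coordinate hinge onto \<open>Ps\<close>.\<close>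
locale hinge_frame = hinge Ps for Ps :: "('n::finite cvec \<times> 'n cvec) set list" +
  fixes blk :: "'n \<Rightarrow> nat" and b c :: "'n \<Rightarrow> 'n cvec"
  assumes b_mem: "\<And>i. b i \<in> dom_flag Ps (blk i)"
    and dom_flag_subset_span:
      "\<And>j. j \<le> length Ps \<Longrightarrow> dom_flag Ps j \<subseteq> vec.span (b ` {i. j \<le> blk i})"
    and b_c_mem: "\<And>i. (b i, c i) \<in> Ps ! blk i"
begin

lemma dom_flag_eq_span: "j \<le> length Ps \<Longrightarrow> dom_flag Ps j = vec.span (b ` {i. j \<le> blk i})"
  using dom_flag_subset_span b_mem dom_flag_antimono subspace_dom_flag
  by (intro equalityI vec.span_minimal) blast+

lemma span_range_b: "vec.span (range b) = UNIV"
  using dom_flag_subset_span[of 0] dom_flag_0 by auto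

lemma ImR_subset_span_if_IndefR_subset_span:
  assumes j: "j < length Ps" and Indef: "IndefR (Ps ! j) \<subseteq> vec.span (c ` {i. blk i < j})"
  shows "ImR (Ps ! j) \<subseteq> vec.span (c ` {i. blk i \<le> j})"
proof
  fix w assume "w \<in> ImR (Ps ! j)"
  then obtain v where vw: "(v, w) \<in> Ps ! j"
    by (auto simp: ImR_def)
  have "v \<in> vec.span (b ` {i. j \<le> blk i})"
    using vw j dom_flag_eq_span[of j] by (force simp: dom_flag_def DomR_def)
  also have "{i. j \<le> blk i} = {i. blk i = j} \<union> {i. Suc j \<le> blk i}"
    by auto
  finally obtain x y where v: "v = x + y" and x: "x \<in> vec.span (b ` {i. blk i = j})"
    and y: "y \<in> vec.span (b ` {i. Suc j \<le> blk i})"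
    unfolding image_Un vec.span_Un by blast
  have "y \<in> KerR (Ps ! j)"
    using y j dom_flag_eq_span[of "Suc j"] by (simp add: dom_flag_Suc)
  then have y0: "(y, 0) \<in> Ps ! j"
    by (simp add: KerR_def)
  have "\<exists>z\<in>vec.span (c ` {i. blk i = j}). (x', z) \<in> Ps ! j" if "x' \<in> b ` {i. blk i = j}" for x'
    using that b_c_mem by (auto intro: vec.span_base)
  then obtain z where z: "z \<in> vec.span (c ` {i. blk i = j})" and xz: "(x, z) \<in> Ps ! j"
    using relation_partner_in_span[OF subspace_nth[OF j] _ x] by blast
  have "(v, w) - (x, z) - (y, 0) \<in> Ps ! j"
    using vw xz y0 by (intro pv.subspace_diff subspace_nth j)
  then have "w - z \<in> vec.span (c ` {i. blk i < j})"
    using v Indef by (auto simp: IndefR_def)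
  moreover have "vec.span (c ` {i. blk i < j}) \<subseteq> vec.span (c ` {i. blk i \<le> j})"
    "vec.span (c ` {i. blk i = j}) \<subseteq> vec.span (c ` {i. blk i \<le> j})"
    by (auto intro!: vec.span_mono)
  ultimately show "w \<in> vec.span (c ` {i. blk i \<le> j})"
    using z vec.span_add[of "w - z" _ z] by auto
qed

lemma ImR_IndefR_subset_span:
  "j < length Ps \<Longrightarrow> ImR (Ps ! j) \<subseteq> vec.span (c ` {i. blk i \<le> j})
     \<and> IndefR (Ps ! j) \<subseteq> vec.span (c ` {i. blk i < j})"
proof (induction j)
  case 0
  have "IndefR (Ps ! 0) \<subseteq> vec.span (c ` {i. blk i < 0})"
    using IndefR_0 vec.span_zero by simp
  then show ?case
    using ImR_subset_span_if_IndefR_subset_span 0 by blast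
next
  case (Suc j)
  then have "IndefR (Ps ! Suc j) \<subseteq> vec.span (c ` {i. blk i < Suc j})"
    using IndefR_Suc by (simp add: less_Suc_eq_le)
  then show ?case
    using ImR_subset_span_if_IndefR_subset_span Suc.prems by blast
qed

lemma span_range_c: "vec.span (range c) = UNIV"
proof -
  have "ImR (Ps ! (length Ps - 1)) = UNIV"
    using is_hinge last_conv_nth[of Ps] length_pos by (simp add: is_hinge_def)
  then have "UNIV \<subseteq> vec.span (c ` {i. blk i \<le> length Ps - 1})"
    using ImR_IndefR_subset_span[of "length Ps - 1"] length_pos by simp
  also have "\<dots> \<subseteq> vec.span (range c)"
    by (rule vec.span_mono) auto
  finally show ?thesis by auto
qed

lemma frame_mem:
  assumes j: "j < length Ps"
  shows "blk i = j \<Longrightarrow> (b i, c i) \<in> Ps ! j"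
    and "j < blk i \<Longrightarrow> (b i, 0) \<in> Ps ! j"
    and "blk i < j \<Longrightarrow> (0, c i) \<in> Ps ! j"
proof -
  show "blk i = j \<Longrightarrow> (b i, c i) \<in> Ps ! j"
    using b_c_mem by auto
  show "(b i, 0) \<in> Ps ! j" if "j < blk i"
    using b_mem[of i] dom_flag_antimono[of "Suc j" "blk i"] that
    by (auto simp: dom_flag_Suc[OF j] KerR_def)
  show "(0, c i) \<in> Ps ! j" if "blk i < j"
    using b_c_mem[of i] ImR_subset_IndefR[OF that j] by (force simp: ImR_def IndefR_def)
qed

lemma act_coord_rel_subset:
  assumes j: "j < length Ps"
  shows "act (matrix_of_columns b) (matrix_of_columns c) (coord_rel blk j) \<subseteq> Ps ! j"
proof (clarsimp simp: act_def)
  fix v w assume "(v, w) \<in> coord_rel blk j"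
  then have v0: "\<And>i. blk i < j \<Longrightarrow> v $ i = 0" and w0: "\<And>i. j < blk i \<Longrightarrow> w $ i = 0"
    and vw: "\<And>i. blk i = j \<Longrightarrow> v $ i = w $ i"
    by (auto simp: coord_rel_def)
  define gen where
    "gen i = (if blk i = j then (b i, c i) else if j < blk i then (b i, 0) else (0, c i))" for i
  define coeff where "coeff i = (if j \<le> blk i then v $ i else w $ i)" for i
  have "coeff i *s fst (gen i) = v $ i *s b i" "coeff i *s snd (gen i) = w $ i *s c i" for i
    using v0[of i] w0[of i] vw[of i] by (auto simp: coeff_def gen_def)
  then have "(matrix_of_columns b *v v, matrix_of_columns c *v w)
      = (\<Sum>i\<in>UNIV. pscale (coeff i) (gen i))"
    by (simp add: prod_eq_iff fst_sum snd_sum pscale_def matrix_of_columns_mult)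
  also have "\<dots> \<in> Ps ! j"
    using frame_mem[OF j]
    by (intro pv.subspace_sum pv.subspace_scale subspace_nth j) (auto simp: gen_def)
  finally show "(matrix_of_columns b *v v, matrix_of_columns c *v w) \<in> Ps ! j" .
qed

lemma act_coord_rel_eq:
  assumes j: "j < length Ps"
  shows "act (matrix_of_columns b) (matrix_of_columns c) (coord_rel blk j) = Ps ! j"
proof -
  have "ndim_subspace (act (matrix_of_columns b) (matrix_of_columns c) (coord_rel blk j))"
    by (intro ndim_subspace_act invertible_matrix_of_columns span_range_b span_range_c
        ndim_subspace_coord_rel)
  then show ?thesis
    using ndim_subspace_nth[OF j] act_coord_rel_subset[OF j]
    by (intro pv_subspace_dim_equal) (auto simp: ndim_subspace_def)
qed

end

lemma (in hinge) normal_form: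
  assumes blk_less: "\<And>i. blk i < length Ps"
    and card_blk: "\<And>j. j < length Ps \<Longrightarrow> card {i. blk i = j} = rkR (Ps ! j)"
  shows "\<exists>g1 g2. invertible g1 \<and> invertible g2
           \<and> Ps = map (act g1 g2) (coord_hinge blk (length Ps))"
proof -
  have "\<exists>b. (\<forall>i. b i \<in> dom_flag Ps (blk i))
      \<and> (\<forall>j\<le>length Ps. dom_flag Ps j \<subseteq> vec.span (b ` {i. j \<le> blk i}))"
    using card_blk rkR_nth
    by (intro vec.flag_adapted_basis_exists[OF dom_flag_Suc_subset dom_flag_length blk_less]) simp
  then obtain b where b_mem: "\<And>i. b i \<in> dom_flag Ps (blk i)"
    and b_span: "\<And>j. j \<le> length Ps \<Longrightarrow> dom_flag Ps j \<subseteq> vec.span (b ` {i. j \<le> blk i})"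
    by blast
  have "\<exists>w. (b i, w) \<in> Ps ! blk i" for i
    using b_mem[of i] blk_less[of i] by (force simp: dom_flag_def DomR_def)
  then obtain c where "\<And>i. (b i, c i) \<in> Ps ! blk i"
    by metis
  then interpret hinge_frame Ps blk b c
    using b_mem b_span by unfold_locales
  have "Ps = map (act (matrix_of_columns b) (matrix_of_columns c)) (coord_hinge blk (length Ps))"
    by (rule nth_equalityI) (simp_all add: coord_hinge_def act_coord_rel_eq)
  then show ?thesis
    using invertible_matrix_of_columns span_range_b span_range_c by blast
qed

section \<open>Classification\<close>

definition std_hinge :: "nat list \<Rightarrow> ('n::finite cvec \<times> 'n cvec) set list" where
  "std_hinge \<alpha> = coord_hinge (blocks \<alpha>) (length \<alpha>)"

lemma
  assumes "\<alpha> \<in> compositions CARD('n::finite)"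
  shows is_hinge_std_hinge: "is_hinge (std_hinge \<alpha> :: ('n cvec \<times> 'n cvec) set list)"
    and map_rkR_std_hinge: "map rkR (std_hinge \<alpha> :: ('n cvec \<times> 'n cvec) set list) = \<alpha>"
proof -
  have sum: "sum_list \<alpha> = CARD('n)" and "\<alpha> \<noteq> []" "\<forall>a\<in>set \<alpha>. 0 < a"
    using assms by (auto simp: compositions_def)
  then show "is_hinge (std_hinge \<alpha> :: ('n cvec \<times> 'n cvec) set list)"
    unfolding std_hinge_def
    by (intro is_hinge_coord_hinge) (auto simp: blocks_less card_blocks)
  show "map rkR (std_hinge \<alpha> :: ('n cvec \<times> 'n cvec) set list) = \<alpha>"
    unfolding std_hinge_def map_rkR_coord_hinge
    by (rule nth_equalityI) (auto simp: card_blocks[OF sum])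
qed

context hinge
begin

lemma hinge_orbit_eq_std_hinge: "hinge_orbit Ps = hinge_orbit (std_hinge (map rkR Ps))"
proof -
  have sum: "sum_list (map rkR Ps) = CARD('n)"
    by (rule sum_list_ranks)
  obtain g1 g2 where "invertible g1" "invertible g2"
    and "Ps = map (act g1 g2) (coord_hinge (blocks (map rkR Ps)) (length Ps))"
    using normal_form[of "blocks (map rkR Ps)"] blocks_less[OF sum] card_blocks[OF sum] by auto
  then have "hinge_orbit Ps = hinge_orbit (coord_hinge (blocks (map rkR Ps)) (length Ps))"
    by (metis hinge_orbit_map_act)
  then show ?thesis
    by (simp add: std_hinge_def)
qed

end

lemma mem_hinge_orbit_iff:
  assumes "is_hinge Ps" "is_hinge Qs"
  shows "Qs \<in> hinge_orbit Ps \<longleftrightarrow> map rkR Ps = map rkR Qs"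
proof
  assume "map rkR Ps = map rkR Qs"
  then have "hinge_orbit Ps = hinge_orbit Qs"
    using hinge.hinge_orbit_eq_std_hinge assms unfolding hinge_def by metis
  then show "Qs \<in> hinge_orbit Ps"
    using mem_hinge_orbit_self by blast
qed (simp add: map_rkR_hinge_orbit)

lemma card_hinge_orbits:
  "card (hinge_orbit ` (Hinge :: ('n::finite cvec \<times> 'n cvec) set list set)) = 2 ^ (CARD('n) - 1)"
proof -
  let ?orbit = "\<lambda>\<alpha>. hinge_orbit (std_hinge \<alpha> :: ('n cvec \<times> 'n cvec) set list)"
  have "hinge_orbit ` (Hinge :: ('n cvec \<times> 'n cvec) set list set) = ?orbit ` compositions CARD('n)"
    using hinge.hinge_orbit_eq_std_hinge hinge.ranks_in_compositions is_hinge_std_hinge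
    by (force simp: Hinge_def hinge_def)
  moreover have "inj_on ?orbit (compositions CARD('n))"
    by (rule inj_onI) (metis map_rkR_std_hinge map_rkR_hinge_orbit mem_hinge_orbit_self)
  moreover have "card (compositions CARD('n)) = 2 ^ (CARD('n) - 1)"
    using card_compositions[of "CARD('n) - 1"] by simp
  ultimately show ?thesis
    by (simp add: card_image)
qed

theorem lemma2p3:
  shows "card (hinge_orbit ` (Hinge :: ('n::finite cvec \<times> 'n cvec) set list set))
           = 2 ^ (CARD('n) - 1)
    \<and> (\<forall>Ps \<in> (Hinge :: ('n cvec \<times> 'n cvec) set list set).
          length Ps \<in> {1..CARD('n)} \<and> (\<forall>P \<in> set Ps. rkR P > 0)
          \<and> sum_list (map rkR Ps) = CARD('n))
    \<and> (\<forall>Ps \<in> (Hinge :: ('n cvec \<times> 'n cvec) set list set). \<forall>Qs \<in> Hinge.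
          Qs \<in> hinge_orbit Ps \<longleftrightarrow> map rkR Ps = map rkR Qs)
    \<and> (\<forall>\<alpha> :: nat list. \<alpha> \<noteq> [] \<and> (\<forall>a \<in> set \<alpha>. a > 0) \<and> sum_list \<alpha> = CARD('n)
          \<longrightarrow> (\<exists>Ps \<in> (Hinge :: ('n cvec \<times> 'n cvec) set list set). map rkR Ps = \<alpha>))"
proof (intro conjI ballI allI impI)
  show "card (hinge_orbit ` (Hinge :: ('n cvec \<times> 'n cvec) set list set)) = 2 ^ (CARD('n) - 1)"
    by (rule card_hinge_orbits)
next
  fix Ps :: "('n cvec \<times> 'n cvec) set list" assume "Ps \<in> Hinge"
  then interpret hinge Ps
    by unfold_locales (simp add: Hinge_def)
  show "length Ps \<in> {1..CARD('n)}"
    using length_pos length_le_card by (simp add: Suc_le_eq)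
  show "0 < rkR P" if "P \<in> set Ps" for P
    using ranks_pos that by blast
  show "sum_list (map rkR Ps) = CARD('n)"
    by (rule sum_list_ranks)
next
  fix Ps Qs :: "('n cvec \<times> 'n cvec) set list" assume "Ps \<in> Hinge" "Qs \<in> Hinge"
  then show "Qs \<in> hinge_orbit Ps \<longleftrightarrow> map rkR Ps = map rkR Qs"
    by (simp add: mem_hinge_orbit_iff Hinge_def)
next
  fix \<alpha> :: "nat list" assume "\<alpha> \<noteq> [] \<and> (\<forall>a\<in>set \<alpha>. 0 < a) \<and> sum_list \<alpha> = CARD('n)"
  then have "\<alpha> \<in> compositions CARD('n)"
    by (simp add: compositions_def)
  then show "\<exists>Ps\<in>(Hinge :: ('n cvec \<times> 'n cvec) set list set). map rkR Ps = \<alpha>"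
    using is_hinge_std_hinge map_rkR_std_hinge by (auto simp: Hinge_def)
qed

end
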